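(* Let $Z$ be a finite set, let $T_1,T_2$ be rooted $Z$-trees with $\mathrm{Seq}(T_1)=\mathrm{Seq}(T_2)$, and assume the subtree of $T_1$ rooted at the left child of its root has at least as many leaves as the subtree rooted at the right child. Let $Q_1,\dots,Q_k$ and $R_1,\dots,R_m$ be as defined in the context. Let $C\ge 4$ be a constant. Then at least one of the following holds: (i) there exist nodes $u\in T_1$, $v\in T_2$ and a leaf $x\in Z$ such that $x\notin \mathrm{Le}((T_1)_u)$, $x\notin\mathrm{Le}((T_2)_v)$ and $|\mathrm{Le}((T_1)_u)\cap \mathrm{Le}((T_2)_v)|\ge |Z|/C$; (ii) $|Q_j|\le \max(2|Z|/C,\,1)$ and $|R_l|\le\max(2|Z|/C,\,1)$ for all $1\le j\le k$, $1\le l\le m$.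
   Context: A rooted $Z$-tree is a binary rooted tree with a root of degree two (or a single node if $|Z|=1$), all other internal nodes of degree three, leaves bijectively labeled by $Z$, and each internal node having a designated left child and right child. For a node $v$, $T_v$ is the subtree rooted at $v$ and $\mathrm{Le}(\cdot)$ denotes the leaf set; the size $|T|$ of a tree is its number of leaves. $\mathrm{Seq}(T)$ is the left-to-right ordering of leaves given by the pre-order traversal of $T$ (visiting the left child before the right child). Let $P_1=(u_1,\dots,u_k)$ be the path in $T_1$ from its left-most leaf $u_1$ (first in $\mathrm{Seq}(T_1)$) to its root $u_k$; set $Q_1:=$ the one-leaf tree $u_1$ and, for $2\le j\le k$, $Q_j:=(T_1)_{c}$ where $c$ is the child of $u_j$ other than $u_{j-1}$. Let $P_2=(w_1,\dots,w_m)$ be the path in $T_2$ from its root $w_1$ to its right-most leaf $w_m$ (last in $\mathrm{Seq}(T_2)$); set $R_m:=$ the one-leaf tree $w_m$ and, for $1\le l<m$, $R_l:=(T_2)_{c}$ where $c$ is the child of $w_l$ other than $w_{l+1}$. *)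

theory Defs
  imports Complex_Main
begin

datatype 'a btree = Lf 'a | Nd "'a btree" "'a btree"

fun Seq :: "'a btree \<Rightarrow> 'a list" where
  "Seq (Lf x) = [x]"
| "Seq (Nd l r) = Seq l @ Seq r"

definition Le :: "'a btree \<Rightarrow> 'a set" where
  "Le T = set (Seq T)"

fun subtrees :: "'a btree \<Rightarrow> 'a btree set" where
  "subtrees (Lf x) = {Lf x}"
| "subtrees (Nd l r) = insert (Nd l r) (subtrees l \<union> subtrees r)"

definition is_Z_tree :: "'a set \<Rightarrow> 'a btree \<Rightarrow> bool" where
  "is_Z_tree Z T \<longleftrightarrow> distinct (Seq T) \<and> set (Seq T) = Z"

text \<open>Q_1,...,Q_k: the one-leaf tree u_1 (left-most leaf), followed by the
  off-path (right) children along the path from u_1 to the root, bottom-up.\<close>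
fun Qs :: "'a btree \<Rightarrow> 'a btree list" where
  "Qs (Lf x) = [Lf x]"
| "Qs (Nd l r) = Qs l @ [r]"

text \<open>R_1,...,R_m: the off-path (left) children along the path from the root
  to the right-most leaf w_m, top-down, followed by the one-leaf tree w_m.\<close>
fun Rs :: "'a btree \<Rightarrow> 'a btree list" where
  "Rs (Lf x) = [Lf x]"
| "Rs (Nd l r) = l # Rs r"

end

theory Submission
  imports Defs
begin

text \<open>Write \<open>T\<^sub>1 = Nd L R\<close>, \<open>T\<^sub>2 = Nd A B\<close> and suppose (i) fails with bound \<open>b = |Z|/C\<close>.
  The first leaf \<open>x\<close> lies in \<open>L\<close> and \<open>A\<close>, the last leaf in \<open>R\<close> and \<open>B\<close>, and since the
  leaf sequences agree one of \<open>L\<close>, \<open>A\<close> contains the other. If \<open>L \<subseteq> A\<close>, a leaf of \<open>B\<close>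
  avoids both, so \<open>|L| < b \<le> |Z|/2\<close>, contradicting \<open>|R| \<le> |L|\<close>; hence \<open>A \<subseteq> L\<close>,
  \<open>R \<subseteq> B\<close> and \<open>|A| < b\<close>. Every \<open>Q\<^sub>j\<close> other than the leaf \<open>x\<close> misses \<open>x\<close>, hence
  \<open>|Q\<^sub>j \<inter> B| < b\<close> and \<open>|Q\<^sub>j| \<le> |A| + |Q\<^sub>j \<inter> B| < 2b\<close>. The bound on the \<open>R\<^sub>l\<close> is
  the same argument for the mirror images of the two trees.\<close>

lemma Seq_not_Nil [simp]: "Seq t \<noteq> []"
  by (induction t) auto

lemma Le_Lf [simp]: "Le (Lf x) = {x}"
  by (simp add: Le_def)

lemma Le_Nd [simp]: "Le (Nd l r) = Le l \<union> Le r"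
  by (simp add: Le_def)

lemma finite_Le [simp]: "finite (Le t)"
  by (simp add: Le_def)

lemma hd_Seq_in_Le: "hd (Seq t) \<in> Le t"
  by (simp add: Le_def)

lemma Le_not_empty: "Le t \<noteq> {}"
  by (simp add: Le_def)

lemma Le_children_disjoint: "distinct (Seq (Nd l r)) \<Longrightarrow> Le l \<inter> Le r = {}"
  by (simp add: Le_def)

lemma Le_eq_if_Seq_eq: "Seq t = Seq t' \<Longrightarrow> Le t = Le t'"
  by (simp add: Le_def)

lemma Seq_eq_singleton_iff: "Seq t = [x] \<longleftrightarrow> t = Lf x"
  by (cases t) (auto simp: append_eq_Cons_conv)

lemma Le_subset_if_subtree: "u \<in> subtrees t \<Longrightarrow> Le u \<subseteq> Le t"
  by (induction t) auto

lemma subtree_self [simp]: "t \<in> subtrees t"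
  by (cases t) auto

lemma subtrees_Nd_children: "l \<in> subtrees (Nd l r)" "r \<in> subtrees (Nd l r)"
  by simp_all

lemma set_nested_if_append_eq:
  "xs @ ys = us @ vs \<Longrightarrow> set us \<subseteq> set xs \<or> set xs \<subseteq> set us"
  by (auto simp: append_eq_append_conv2)

lemma Qs_subtrees: "Q \<in> set (Qs t) \<Longrightarrow> Q \<in> subtrees t"
  by (induction t) (auto simp: subtrees_Nd_children)

lemma Qs_avoid_first_leaf:
  "distinct (Seq t) \<Longrightarrow> Q \<in> set (Qs t) \<Longrightarrow> Q = Lf (hd (Seq t)) \<or> hd (Seq t) \<notin> Le Q"
proof (induction t)
  case (Nd l r)
  then show ?case
    using hd_Seq_in_Le[of l] Le_children_disjoint[OF Nd.prems(1)] by auto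
qed simp

fun mirror :: "'a btree \<Rightarrow> 'a btree" where
  "mirror (Lf x) = Lf x"
| "mirror (Nd l r) = Nd (mirror r) (mirror l)"

lemma mirror_mirror [simp]: "mirror (mirror t) = t"
  by (induction t) auto

lemma Seq_mirror [simp]: "Seq (mirror t) = rev (Seq t)"
  by (induction t) auto

lemma Le_mirror [simp]: "Le (mirror t) = Le t"
  by (simp add: Le_def)

lemma subtrees_mirror: "subtrees (mirror t) = mirror ` subtrees t"
  by (induction t) auto

lemma Rs_eq_mirror_Qs: "Rs t = rev (map mirror (Qs (mirror t)))"
  by (induction t) auto

definition overlaps_below :: "real \<Rightarrow> 'a btree \<Rightarrow> 'a btree \<Rightarrow> bool" where
  "overlaps_below b T T' \<longleftrightarrow>
     (\<forall>u\<in>subtrees T. \<forall>v\<in>subtrees T'. \<forall>x\<in>Le T \<union> Le T'.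
        x \<notin> Le u \<longrightarrow> x \<notin> Le v \<longrightarrow> real (card (Le u \<inter> Le v)) < b)"

lemma overlaps_belowD:
  "overlaps_below b T T' \<Longrightarrow> u \<in> subtrees T \<Longrightarrow> v \<in> subtrees T' \<Longrightarrow> x \<in> Le T \<union> Le T' \<Longrightarrow>
    x \<notin> Le u \<Longrightarrow> x \<notin> Le v \<Longrightarrow> real (card (Le u \<inter> Le v)) < b"
  by (simp add: overlaps_below_def)

lemma overlaps_below_commute: "overlaps_below b T T' \<Longrightarrow> overlaps_below b T' T"
  unfolding overlaps_below_def by (metis Int_commute Un_commute)

lemma overlaps_below_mirror:
  "overlaps_below b (mirror T) (mirror T') \<longleftrightarrow> overlaps_below b T T'"
  by (simp add: overlaps_below_def subtrees_mirror)

lemma Le_left_child_subset_if_overlaps_below: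
  assumes seq: "Seq (Nd L R) = Seq (Nd A B)" and dist: "distinct (Seq (Nd L R))"
    and balanced: "card (Le R) \<le> card (Le L)"
    and ov: "overlaps_below b (Nd L R) (Nd A B)"
    and b: "2 * b \<le> real (card (Le (Nd L R)))"
  shows "Le A \<subseteq> Le L"
proof (rule ccontr)
  assume "\<not> Le A \<subseteq> Le L"
  with seq have LA: "Le L \<subseteq> Le A"
    using set_nested_if_append_eq[of "Seq L" "Seq R" "Seq A" "Seq B"] by (auto simp: Le_def)
  obtain y where y: "y \<in> Le B" using Le_not_empty[of B] by blast
  have disjoint: "Le L \<inter> Le R = {}" "Le A \<inter> Le B = {}"
    using dist seq Le_children_disjoint by metis+
  have "Le (Nd L R) = Le (Nd A B)" using seq by (rule Le_eq_if_Seq_eq)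
  then have "real (card (Le L \<inter> Le A)) < b"
    using y disjoint LA
    by (intro overlaps_belowD[OF ov subtrees_Nd_children(1) subtrees_Nd_children(1), of y]) auto
  moreover have "card (Le (Nd L R)) = card (Le L) + card (Le R)"
    using disjoint by (simp add: card_Un_disjoint)
  ultimately show False
    using LA balanced b by (simp add: Int_absorb2)
qed

lemma card_Qs_le_if_overlaps_below:
  assumes seq: "Seq (Nd L R) = Seq (Nd A B)" and dist: "distinct (Seq (Nd L R))"
    and AL: "Le A \<subseteq> Le L" and ov: "overlaps_below b (Nd L R) (Nd A B)"
    and Q: "Q \<in> set (Qs (Nd L R))"
  shows "real (card (Le Q)) \<le> max (2 * b) 1"
proof -
  define x where "x = hd (Seq L)"
  have disjoint: "Le L \<inter> Le R = {}" "Le A \<inter> Le B = {}"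
    using dist seq Le_children_disjoint by metis+
  have same_leaves: "Le L \<union> Le R = Le A \<union> Le B"
    using Le_eq_if_Seq_eq[OF seq] by simp
  have "x = hd (Seq A)"
    using arg_cong[OF seq, of hd] by (simp add: x_def)
  then have xA: "x \<in> Le A" by (simp add: hd_Seq_in_Le)
  have RB: "Le R \<subseteq> Le B" using same_leaves AL disjoint by blast
  have cross_B: "real (card (Le Q' \<inter> Le B)) < b"
    if "Q' \<in> subtrees (Nd L R)" "x \<notin> Le Q'" for Q'
    using xA disjoint that
    by (intro overlaps_belowD[OF ov that(1) subtrees_Nd_children(2), of x]) auto
  obtain y where y: "y \<in> Le R" using Le_not_empty[of R] by blast
  have "real (card (Le L \<inter> Le A)) < b"
    using y disjoint RB
    by (intro overlaps_belowD[OF ov subtrees_Nd_children(1) subtrees_Nd_children(1), of y]) auto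
  then have A_small: "real (card (Le A)) < b"
    using AL by (simp add: Int_absorb1)
  consider (right) "Q = R" | (left) "Q \<in> set (Qs L)" using Q by auto
  then show ?thesis
  proof cases
    case right
    have "x \<notin> Le R" using xA AL disjoint by blast
    then have "real (card (Le R)) < b"
      using cross_B[of R] RB by (simp add: subtrees_Nd_children Int_absorb2)
    with right show ?thesis by simp
  next
    case left
    have "distinct (Seq L)" using dist by simp
    then consider "Q = Lf x" | (avoids) "x \<notin> Le Q"
      using Qs_avoid_first_leaf[OF _ left] by (auto simp: x_def)
    then show ?thesis
    proof cases
      case avoids
      have "Q \<in> subtrees (Nd L R)" using Qs_subtrees[OF left] by simp
      then have QB: "real (card (Le Q \<inter> Le B)) < b" using cross_B avoids by blast
      have "Le Q \<subseteq> Le A \<union> Le B"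
        using Le_subset_if_subtree[OF Qs_subtrees[OF left]] same_leaves by blast
      then have "card (Le Q) \<le> card (Le Q \<inter> Le A) + card (Le Q \<inter> Le B)"
        by (metis Int_Un_distrib Int_absorb2 card_Un_le)
      also have "\<dots> \<le> card (Le A) + card (Le Q \<inter> Le B)"
        by (simp add: card_mono)
      finally show ?thesis using A_small QB by linarith
    qed simp
  qed
qed

lemma card_Rs_le_if_overlaps_below:
  assumes seq: "Seq (Nd L R) = Seq (Nd A B)" and dist: "distinct (Seq (Nd L R))"
    and AL: "Le A \<subseteq> Le L" and ov: "overlaps_below b (Nd L R) (Nd A B)"
    and R': "R' \<in> set (Rs (Nd A B))"
  shows "real (card (Le R')) \<le> max (2 * b) 1"
proof -
  have "Le R \<subseteq> Le B"
    using Le_eq_if_Seq_eq[OF seq] AL Le_children_disjoint[OF dist]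
      Le_children_disjoint[of A B] dist seq by auto
  moreover have "Seq (mirror (Nd A B)) = Seq (mirror (Nd L R))"
    using seq by (simp only: Seq_mirror)
  moreover have "distinct (Seq (mirror (Nd A B)))"
    using dist seq by (simp only: Seq_mirror distinct_rev)
  moreover have "overlaps_below b (mirror (Nd A B)) (mirror (Nd L R))"
    using overlaps_below_commute[OF ov] by (simp only: overlaps_below_mirror)
  moreover obtain Q where "Q \<in> set (Qs (mirror (Nd A B)))" "R' = mirror Q"
    using R' unfolding Rs_eq_mirror_Qs[of "Nd A B"] set_rev set_map by blast
  ultimately show ?thesis
    using card_Qs_le_if_overlaps_below[of "mirror B" "mirror A" "mirror R" "mirror L" b Q]
    by simp
qed

theorem lemma1:
  fixes Z :: "'a set" and T1 T2 :: "'a btree" and C :: real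
  assumes "finite Z"
    and "is_Z_tree Z T1" and "is_Z_tree Z T2"
    and "Seq T1 = Seq T2"
    and "\<And>l r. T1 = Nd l r \<Longrightarrow> card (Le r) \<le> card (Le l)"
    and "C \<ge> 4"
  shows "(\<exists>u\<in>subtrees T1. \<exists>v\<in>subtrees T2. \<exists>x\<in>Z.
            x \<notin> Le u \<and> x \<notin> Le v \<and> real (card (Le u \<inter> Le v)) \<ge> real (card Z) / C)
       \<or> ((\<forall>Q\<in>set (Qs T1). real (card (Le Q)) \<le> max (2 * real (card Z) / C) 1)
          \<and> (\<forall>R\<in>set (Rs T2). real (card (Le R)) \<le> max (2 * real (card Z) / C) 1))"
proof (cases T1)
  case (Lf x)
  then have "T2 = Lf x" using assms(4) by (simp flip: Seq_eq_singleton_iff)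
  with Lf show ?thesis by simp
next
  case (Nd L R)
  obtain A B where T2: "T2 = Nd A B"
    using assms(4) Nd by (cases T2) (auto simp: append_eq_Cons_conv simp flip: Seq_eq_singleton_iff)
  have leaves: "Le T1 = Z" "Le T2 = Z" and dist: "distinct (Seq T1)"
    using assms(2,3) by (auto simp: is_Z_tree_def Le_def)
  define b where "b = real (card Z) / C"
  have "2 * b \<le> real (card (Le T1))"
    using assms(6) leaves mult_right_mono[of 2 C "real (card Z)"] by (simp add: b_def field_simps)
  moreover have "overlaps_below b T1 T2" if "\<not> (\<exists>u\<in>subtrees T1. \<exists>v\<in>subtrees T2. \<exists>x\<in>Z.
      x \<notin> Le u \<and> x \<notin> Le v \<and> real (card (Le u \<inter> Le v)) \<ge> real (card Z) / C)"
    using that leaves by (auto simp: overlaps_below_def b_def not_le)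
  ultimately show ?thesis
    using Le_left_child_subset_if_overlaps_below card_Qs_le_if_overlaps_below
      card_Rs_le_if_overlaps_below assms(4,5) dist
    unfolding Nd T2 b_def by (metis times_divide_eq_right)
qed

end
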